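(* Let $C \subseteq \mathbb{R}^n$ be a nonempty closed convex set, let $\mathcal{H}$ be a hyperplane arrangement in $\mathbb{R}^n$, let $x \in \mathbb{R}^n$, and let $\delta$ be a convex distance function to $x$. Let $A$ be a pattern such that $R_A$ contains a point of $\operatorname{argmin}_{v \in C} \delta(v)$, and let $A'$ be a pattern with $R_{A'} \cap C \neq \emptyset$. Then there is a sequence of patterns $A = A^1, A^2, \dots, A^{k}, A^{k+1} = A'$ such that: (i) $A^i$ and $A^{i+1}$ are neighbors for all $i \in [k]$; (ii) $\operatorname{dist}(R_{A^i} \cap C) \le \operatorname{dist}(R_{A^{i+1}} \cap C)$ for all $i \in [k]$; (iii) $R_{A^i} \cap C \neq \emptyset$ for all $i \in [k+1]$.
   Context: A hyperplane is a set $\{v : a^\top v = b\}$ with $a \in \mathbb{R}^n\setminus\{0\}$, $b \in \mathbb{R}$; its halfspaces are $H^{\le} = \{v : a^\top v \le b\}$ and $H^{\ge} = \{v : a^\top v \ge b\}$. A hyperplane arrangement $\mathcal{H}$ is a finite set of hyperplanes, each with a fixed representation $(a,b)$. A pattern is a function $P : \mathcal{H} \to \{-1,1\}$, and its region is the closed polyhedron $R_P := \bigcap_{P(H)=-1} H^{\le} \cap \bigcap_{P(H)=1} H^{\ge}$. Two patterns are neighbors if they differ on exactly one hyperplane. A convex distance function to $x$ is a convex, continuous function $\delta : \mathbb{R}^n \to [0,\infty)$ with bounded sublevel sets and $\delta(x)=0$ (e.g. $\delta(v) = \|v - x\|_p$, $p \ge 1$); for a nonempty closed set $S$, $\operatorname{dist}(S)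 := \min_{v \in S} \delta(v)$. $[k] = \{1,\dots,k\}$. *)

theory Defs
  imports "HOL-Analysis.Analysis"
begin

definition hyperplane_of :: "'a::euclidean_space \<times> real \<Rightarrow> 'a set" where
  "hyperplane_of h = {v. fst h \<bullet> v = snd h}"

definition hyperplane_arrangement :: "('a::euclidean_space \<times> real) set \<Rightarrow> bool" where
  "hyperplane_arrangement H \<longleftrightarrow> finite H \<and> (\<forall>h\<in>H. fst h \<noteq> 0) \<and> inj_on hyperplane_of H"

definition patterns :: "('a::euclidean_space \<times> real) set \<Rightarrow> ('a \<times> real \<Rightarrow> int) set" where
  "patterns H = H \<rightarrow>\<^sub>E {-1, 1}"

definition region :: "('a::euclidean_space \<times> real) set \<Rightarrow> ('a \<times> real \<Rightarrow> int) \<Rightarrow> 'a set" where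
  "region H P = {v. \<forall>h\<in>H. (P h = -1 \<longrightarrow> fst h \<bullet> v \<le> snd h) \<and> (P h = 1 \<longrightarrow> fst h \<bullet> v \<ge> snd h)}"

definition neighbors :: "('a::euclidean_space \<times> real) set \<Rightarrow> ('a \<times> real \<Rightarrow> int) \<Rightarrow> ('a \<times> real \<Rightarrow> int) \<Rightarrow> bool" where
  "neighbors H P Q \<longleftrightarrow> card {h\<in>H. P h \<noteq> Q h} = 1"

definition convex_distance_function :: "('a::euclidean_space \<Rightarrow> real) \<Rightarrow> 'a \<Rightarrow> bool" where
  "convex_distance_function \<delta> x \<longleftrightarrow>
     convex_on UNIV \<delta> \<and> continuous_on UNIV \<delta> \<and> (\<forall>v. \<delta> v \<ge> 0) \<and>
     (\<forall>t. bounded {v. \<delta> v \<le> t}) \<and> \<delta> x = 0"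

text \<open>dist(S) = min over S of \<delta> (attained for nonempty closed S); written as an infimum.\<close>
definition distS :: "('a \<Rightarrow> real) \<Rightarrow> 'a set \<Rightarrow> real" where
  "distS \<delta> S = (INF v\<in>S. \<delta> v)"

definition argmin_on :: "('a \<Rightarrow> real) \<Rightarrow> 'a set \<Rightarrow> 'a set" where
  "argmin_on \<delta> C = {v\<in>C. \<forall>w\<in>C. \<delta> v \<le> \<delta> w}"

end

theory Submission
  imports Defs
begin

text \<open>Induction on the number of hyperplanes on which the current target pattern \<open>A'\<close>
  disagrees with \<open>A\<close>. Let \<open>y \<in> R\<^sub>A\<close> minimise \<open>\<delta>\<close> on \<open>C\<close> and \<open>z\<close> minimise \<open>\<delta>\<close> on \<open>R\<^sub>A\<^sub>' \<inter> C\<close>.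
  Walking along the segment from \<open>y\<close> to \<open>z\<close>, the last point \<open>p\<close> where a disagreeing
  hyperplane is crossed lies in the region of the neighbour \<open>Q\<close> of \<open>A'\<close> obtained by flipping
  that hyperplane, and \<open>p \<in> C\<close> by convexity of \<open>C\<close>. Convexity of \<open>\<delta>\<close> gives
  \<open>dist(R\<^sub>Q \<inter> C) \<le> \<delta> p \<le> max (\<delta> y) (\<delta> z) = \<delta> z = dist(R\<^sub>A\<^sub>' \<inter> C)\<close>, and \<open>Q\<close> is one
  hyperplane closer to \<open>A\<close>.\<close>

inductive monotone_walk ::
  "('a::euclidean_space \<times> real) set \<Rightarrow> 'a set \<Rightarrow> ('a \<Rightarrow> real)
     \<Rightarrow> ('a \<times> real \<Rightarrow> int) \<Rightarrow> ('a \<times> real \<Rightarrow> int) \<Rightarrow> bool"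
  for H C \<delta> where
  walk_refl: "P \<in> patterns H \<Longrightarrow> region H P \<inter> C \<noteq> {} \<Longrightarrow> monotone_walk H C \<delta> P P"
| walk_snoc: "monotone_walk H C \<delta> P Q \<Longrightarrow> neighbors H Q R \<Longrightarrow> R \<in> patterns H \<Longrightarrow>
    region H R \<inter> C \<noteq> {} \<Longrightarrow> distS \<delta> (region H Q \<inter> C) \<le> distS \<delta> (region H R \<inter> C) \<Longrightarrow>
    monotone_walk H C \<delta> P R"

lemma monotone_walk_sequence:
  assumes "monotone_walk H C \<delta> P R"
  shows "\<exists>(k::nat) S. S 1 = P \<and> S (k + 1) = R \<and>
           (\<forall>i\<in>{1..k+1}. S i \<in> patterns H) \<and>
           (\<forall>i\<in>{1..k}. neighbors H (S i) (S (i + 1))) \<and>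
           (\<forall>i\<in>{1..k}. distS \<delta> (region H (S i) \<inter> C) \<le> distS \<delta> (region H (S (i + 1)) \<inter> C)) \<and>
           (\<forall>i\<in>{1..k+1}. region H (S i) \<inter> C \<noteq> {})"
  using assms
proof (induction rule: monotone_walk.induct)
  case (walk_refl P)
  then show ?case by (intro exI[of _ 0] exI[of _ "\<lambda>_. P"]) auto
next
  case (walk_snoc P Q R)
  then obtain k :: nat and S where S: "S 1 = P" "S (k + 1) = Q"
    "\<forall>i\<in>{1..k+1}. S i \<in> patterns H"
    "\<forall>i\<in>{1..k}. neighbors H (S i) (S (i + 1))"
    "\<forall>i\<in>{1..k}. distS \<delta> (region H (S i) \<inter> C) \<le> distS \<delta> (region H (S (i + 1)) \<inter> C)"
    "\<forall>i\<in>{1..k+1}. region H (S i) \<inter> C \<noteq> {}"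
    by blast
  define S' where "S' = S(k + 2 := R)"
  have "neighbors H (S' i) (S' (i + 1)) \<and>
      distS \<delta> (region H (S' i) \<inter> C) \<le> distS \<delta> (region H (S' (i + 1)) \<inter> C)"
    if "i \<in> {1..Suc k}" for i
    using that S(2,4,5) walk_snoc.hyps unfolding S'_def by (cases "i = k + 1") auto
  moreover have "S' i \<in> patterns H \<and> region H (S' i) \<inter> C \<noteq> {}" if "i \<in> {1..Suc k + 1}" for i
    using that S(3,6) walk_snoc.hyps unfolding S'_def by (cases "i = k + 2") auto
  moreover have "S' 1 = P" "S' (Suc k + 1) = R" using S(1) unfolding S'_def by auto
  ultimately show ?case by (intro exI[of _ "Suc k"] exI[of _ S']) blast
qed

lemma mem_region_iff_sign:
  assumes "P \<in> patterns H"
  shows "v \<in> region H P \<longleftrightarrow> (\<forall>h\<in>H. 0 \<le> real_of_int (P h) * (fst h \<bullet> v - snd h))"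
proof -
  have "((P h = -1 \<longrightarrow> fst h \<bullet> v \<le> snd h) \<and> (P h = 1 \<longrightarrow> fst h \<bullet> v \<ge> snd h))
      \<longleftrightarrow> 0 \<le> real_of_int (P h) * (fst h \<bullet> v - snd h)" if "h \<in> H" for h
  proof -
    from assms that consider "P h = -1" | "P h = 1" unfolding patterns_def by auto
    then show ?thesis by cases auto
  qed
  then show ?thesis unfolding region_def by auto
qed

lemma closed_region: "closed (region H P)"
proof -
  have "region H P = (\<Inter>h\<in>H. {v. P h = -1 \<longrightarrow> fst h \<bullet> v \<le> snd h} \<inter> {v. P h = 1 \<longrightarrow> fst h \<bullet> v \<ge> snd h})"
    unfolding region_def by auto
  moreover have "closed {v. P h = -1 \<longrightarrow> fst h \<bullet> v \<le> snd h}" for h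
    by (cases "P h = -1") (auto simp: closed_halfspace_le)
  moreover have "closed {v. P h = 1 \<longrightarrow> fst h \<bullet> v \<ge> snd h}" for h
    by (cases "P h = 1") (auto simp: closed_halfspace_ge)
  ultimately show ?thesis by (auto intro!: closed_INT closed_Int)
qed

lemma patterns_eqI:
  assumes "P \<in> patterns H" "Q \<in> patterns H" "\<forall>h\<in>H. P h = Q h"
  shows "P = Q"
  using assms unfolding patterns_def by (metis PiE_ext)

lemma pattern_value_flip:
  assumes "P \<in> patterns H" "Q \<in> patterns H" "h \<in> H" "P h \<noteq> Q h"
  shows "P h = - Q h"
proof -
  have "P h \<in> {-1, 1}" "Q h \<in> {-1, 1}" using assms(1-3) unfolding patterns_def by auto
  with assms(4) show ?thesis by auto
qed

lemma pattern_update_in_patterns: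
  assumes "P \<in> patterns H" "Q \<in> patterns H" "j \<in> H"
  shows "Q(j := P j) \<in> patterns H"
  using assms unfolding patterns_def by (auto simp: PiE_iff extensional_def)

lemma neighbors_pattern_update:
  assumes "j \<in> H" "P j \<noteq> Q j"
  shows "neighbors H (Q(j := P j)) Q"
proof -
  have "{h\<in>H. (Q(j := P j)) h \<noteq> Q h} = {j}" using assms by auto
  then show ?thesis unfolding neighbors_def by simp
qed

lemma card_disagreements_pattern_update:
  assumes "finite H" "j \<in> H" "P j \<noteq> Q j"
  shows "card {h\<in>H. P h \<noteq> (Q(j := P j)) h} < card {h\<in>H. P h \<noteq> Q h}"
proof -
  have "{h\<in>H. P h \<noteq> (Q(j := P j)) h} = {h\<in>H. P h \<noteq> Q h} - {j}" by auto
  moreover have "card ({h\<in>H. P h \<noteq> Q h} - {j}) < card {h\<in>H. P h \<noteq> Q h}"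
    using assms by (intro card_Diff1_less) auto
  ultimately show ?thesis by simp
qed

lemma affine_zero_crossing:
  fixes a b :: real
  assumes "a \<le> 0" "0 \<le> b"
  defines "r \<equiv> if b = a then 0 else a / (a - b)"
  shows "0 \<le> r" "r \<le> 1" "(1 - r) * a + r * b = 0"
    and "r \<le> s \<Longrightarrow> 0 \<le> (1 - s) * a + s * b"
proof -
  show "0 \<le> r" "r \<le> 1" "(1 - r) * a + r * b = 0"
    using assms by (auto simp: r_def field_simps)
  assume "r \<le> s"
  then have "a + r * (b - a) \<le> a + s * (b - a)"
    using assms(1,2) by (simp add: mult_right_mono)
  with \<open>(1 - r) * a + r * b = 0\<close> show "0 \<le> (1 - s) * a + s * b" by (simp add: algebra_simps)
qed

lemma affine_family_last_zero:
  fixes g0 g1 :: "'i \<Rightarrow> real"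
  assumes "finite D" "D \<noteq> {}" "\<And>h. h \<in> D \<Longrightarrow> g0 h \<le> 0" "\<And>h. h \<in> D \<Longrightarrow> 0 \<le> g1 h"
  obtains t j where "0 \<le> t" "t \<le> 1" "j \<in> D" "(1 - t) * g0 j + t * g1 j = 0"
    "\<And>h. h \<in> D \<Longrightarrow> 0 \<le> (1 - t) * g0 h + t * g1 h"
proof -
  define r where "r h = (if g1 h = g0 h then 0 else g0 h / (g0 h - g1 h))" for h
  have "Max (r ` D) \<in> r ` D" using assms(1,2) by simp
  then obtain j where j: "j \<in> D" "r j = Max (r ` D)" by auto
  have r: "0 \<le> r j" "r j \<le> 1" "(1 - r j) * g0 j + r j * g1 j = 0"
    unfolding r_def by (rule affine_zero_crossing(1-3)[OF assms(3,4)[OF j(1)]])+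
  have "0 \<le> (1 - r j) * g0 h + r j * g1 h" if "h \<in> D" for h
    using affine_zero_crossing(4)[OF assms(3,4)[OF that]] that j assms(1) unfolding r_def by simp
  then show thesis by (rule that[OF r(1,2) j(1) r(3)])
qed

lemma sign_affine_combination:
  "c * (a \<bullet> ((1 - t) *\<^sub>R y + t *\<^sub>R z) - b) = (1 - t) * (c * (a \<bullet> y - b)) + t * (c * (a \<bullet> z - b))"
  by (simp add: inner_add_right algebra_simps)

lemma segment_meets_neighbor_region:
  assumes "finite H" "P \<in> patterns H" "P' \<in> patterns H" "P \<noteq> P'"
    and "y \<in> region H P" "z \<in> region H P'"
  obtains t j where "0 \<le> t" "t \<le> 1" "j \<in> H" "P j \<noteq> P' j"
    "(1 - t) *\<^sub>R y + t *\<^sub>R z \<in> region H (P'(j := P j))"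
proof -
  define D where "D = {h\<in>H. P h \<noteq> P' h}"
  define g0 where "g0 h = real_of_int (P' h) * (fst h \<bullet> y - snd h)" for h
  define g1 where "g1 h = real_of_int (P' h) * (fst h \<bullet> z - snd h)" for h
  have y_sign: "0 \<le> real_of_int (P h) * (fst h \<bullet> y - snd h)" if "h \<in> H" for h
    using assms(5) that mem_region_iff_sign[OF assms(2)] by blast
  have g1_nonneg: "0 \<le> g1 h" if "h \<in> H" for h
    using assms(6) that mem_region_iff_sign[OF assms(3)] unfolding g1_def by blast
  have g0_D: "g0 h \<le> 0" if "h \<in> D" for h
  proof -
    have "h \<in> H" "P h = - P' h" using that pattern_value_flip[OF assms(2,3)] unfolding D_def by auto
    then show ?thesis using y_sign[of h] unfolding g0_def by simp
  qed
  have g0_not_D: "0 \<le> g0 h" if "h \<in> H" "h \<notin> D" for h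
    using that y_sign[of h] unfolding D_def g0_def by auto
  have "D \<noteq> {}" using patterns_eqI[OF assms(2,3)] assms(4) unfolding D_def by blast
  moreover have "finite D" using assms(1) unfolding D_def by simp
  moreover have "0 \<le> g1 h" if "h \<in> D" for h using that g1_nonneg unfolding D_def by simp
  ultimately obtain t j where t: "0 \<le> t" "t \<le> 1" "j \<in> D" "(1 - t) * g0 j + t * g1 j = 0"
    and D_nonneg: "\<And>h. h \<in> D \<Longrightarrow> 0 \<le> (1 - t) * g0 h + t * g1 h"
    using affine_family_last_zero[of D g0 g1] g0_D by blast
  have jH: "j \<in> H" "P j \<noteq> P' j" using t(3) unfolding D_def by auto
  let ?p = "(1 - t) *\<^sub>R y + t *\<^sub>R z"
  have combination: "real_of_int (P' h) * (fst h \<bullet> ?p - snd h) = (1 - t) * g0 h + t * g1 h" for h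
    unfolding g0_def g1_def by (rule sign_affine_combination)
  have "0 \<le> real_of_int ((P'(j := P j)) h) * (fst h \<bullet> ?p - snd h)" if "h \<in> H" for h
  proof (cases "h = j")
    case True
    have "real_of_int (P' j) * (fst j \<bullet> ?p - snd j) = 0" using combination[of j] t(4) by linarith
    moreover have "real_of_int ((P'(j := P j)) h) * (fst h \<bullet> ?p - snd h)
        = - (real_of_int (P' j) * (fst j \<bullet> ?p - snd j))"
      using True pattern_value_flip[OF assms(2,3) jH] by simp
    ultimately show ?thesis by linarith
  next
    case False
    have "0 \<le> (1 - t) * g0 h + t * g1 h"
      using D_nonneg g0_not_D[OF that] g1_nonneg[OF that] t(1,2) by (cases "h \<in> D") auto
    then show ?thesis using False combination[of h] by simp
  qed
  then have "?p \<in> region H (P'(j := P j))"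
    using mem_region_iff_sign[OF pattern_update_in_patterns[OF assms(2,3) jH(1)]] by blast
  with t(1,2) jH that show thesis by blast
qed

lemma convex_distance_function_attains_min:
  assumes "convex_distance_function \<delta> x" "closed K" "K \<noteq> {}"
  obtains z where "z \<in> K" "\<And>w. w \<in> K \<Longrightarrow> \<delta> z \<le> \<delta> w"
proof -
  obtain w0 where w0: "w0 \<in> K" using assms(3) by auto
  have cont: "continuous_on UNIV \<delta>" and bd: "bounded {v. \<delta> v \<le> \<delta> w0}"
    using assms(1) unfolding convex_distance_function_def by auto
  define L where "L = K \<inter> {v. \<delta> v \<le> \<delta> w0}"
  have "closed {v. \<delta> v \<le> \<delta> w0}"
    using cont by (intro closed_Collect_le) (auto intro: continuous_on_subset continuous_intros)
  then have "compact L" unfolding L_def using assms(2) bd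
    by (meson bounded_Int compact_eq_bounded_closed closed_Int)
  moreover have "L \<noteq> {}" using w0 unfolding L_def by auto
  moreover have "continuous_on L \<delta>" using cont continuous_on_subset by blast
  ultimately obtain z where z: "z \<in> L" "\<forall>w\<in>L. \<delta> z \<le> \<delta> w"
    using continuous_attains_inf by blast
  have "\<delta> z \<le> \<delta> w" if "w \<in> K" for w
    using z that unfolding L_def by (cases "\<delta> w \<le> \<delta> w0") auto
  moreover have "z \<in> K" using z(1) unfolding L_def by simp
  ultimately show thesis using that by blast
qed

lemma distS_le:
  assumes "\<And>v. 0 \<le> \<delta> v" "p \<in> S"
  shows "distS \<delta> S \<le> \<delta> p"
  unfolding distS_def using assms by (intro cINF_lower bdd_belowI2[where m = 0]) auto

lemma distS_eq_min:
  assumes "z \<in> S" "\<And>w. w \<in> S \<Longrightarrow> \<delta> z \<le> \<delta> w"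
  shows "distS \<delta> S = \<delta> z"
  unfolding distS_def using assms
  by (intro antisym cINF_lower cINF_greatest bdd_belowI2[where m = "\<delta> z"]) auto

lemma exists_closer_neighbor:
  assumes "closed C" "convex C" "finite H" "convex_distance_function \<delta> x"
    and "A \<in> patterns H" "y \<in> region H A" "y \<in> argmin_on \<delta> C"
    and "A' \<in> patterns H" "region H A' \<inter> C \<noteq> {}" "A \<noteq> A'"
  obtains Q where "Q \<in> patterns H" "neighbors H Q A'" "region H Q \<inter> C \<noteq> {}"
    "distS \<delta> (region H Q \<inter> C) \<le> distS \<delta> (region H A' \<inter> C)"
    "card {h\<in>H. A h \<noteq> Q h} < card {h\<in>H. A h \<noteq> A' h}"
proof -
  have \<delta>_nonneg: "\<And>v. 0 \<le> \<delta> v" and \<delta>_convex: "convex_on UNIV \<delta>"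
    using assms(4) unfolding convex_distance_function_def by auto
  obtain z where z: "z \<in> region H A' \<inter> C" "\<And>w. w \<in> region H A' \<inter> C \<Longrightarrow> \<delta> z \<le> \<delta> w"
    using convex_distance_function_attains_min[OF assms(4) closed_Int[OF closed_region assms(1)] assms(9)]
    by blast
  obtain t j where t: "0 \<le> t" "t \<le> 1" and j: "j \<in> H" "A j \<noteq> A' j"
    and p_region: "(1 - t) *\<^sub>R y + t *\<^sub>R z \<in> region H (A'(j := A j))"
    by (rule segment_meets_neighbor_region[OF assms(3,5,8,10,6) IntD1[OF z(1)]])
  let ?p = "(1 - t) *\<^sub>R y + t *\<^sub>R z"
  let ?Q = "A'(j := A j)"
  have y: "y \<in> C" "\<And>w. w \<in> C \<Longrightarrow> \<delta> y \<le> \<delta> w" using assms(7) unfolding argmin_on_def by auto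
  have p_C: "?p \<in> C" using convexD[OF assms(2) y(1) IntD2[OF z(1)]] t by simp
  have "distS \<delta> (region H ?Q \<inter> C) \<le> \<delta> ?p" by (rule distS_le[OF \<delta>_nonneg IntI[OF p_region p_C]])
  also have "\<dots> \<le> max (\<delta> y) (\<delta> z)" using convex_lower[OF \<delta>_convex UNIV_I UNIV_I, of "1 - t" t] t by simp
  also have "\<dots> = \<delta> z" using y(2) z(1) by simp
  also have "\<dots> = distS \<delta> (region H A' \<inter> C)" by (rule distS_eq_min[where \<delta> = \<delta>, OF z, symmetric])
  finally have closer: "distS \<delta> (region H ?Q \<inter> C) \<le> distS \<delta> (region H A' \<inter> C)" .
  have "region H ?Q \<inter> C \<noteq> {}" using p_region p_C by blast
  then show thesis
    by (rule that[OF pattern_update_in_patterns[OF assms(5,8) j(1)]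
          neighbors_pattern_update[where P = A and Q = A', OF j] _ closer
          card_disagreements_pattern_update[where P = A and Q = A', OF assms(3) j]])
qed

lemma monotone_walk_from_argmin:
  assumes "closed C" "convex C" "finite H" "convex_distance_function \<delta> x"
    and "A \<in> patterns H" "y \<in> region H A" "y \<in> argmin_on \<delta> C"
    and "A' \<in> patterns H" "region H A' \<inter> C \<noteq> {}"
  shows "monotone_walk H C \<delta> A A'"
  using assms(8,9)
proof (induction "card {h\<in>H. A h \<noteq> A' h}" arbitrary: A' rule: less_induct)
  case less
  show ?case
  proof (cases "A = A'")
    case True
    then show ?thesis using less.prems by (simp add: walk_refl)
  next
    case False
    then obtain Q where Q: "Q \<in> patterns H" "neighbors H Q A'" "region H Q \<inter> C \<noteq> {}"
      "distS \<delta> (region H Q \<inter> C) \<le> distS \<delta> (region H A' \<inter> C)"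
      "card {h\<in>H. A h \<noteq> Q h} < card {h\<in>H. A h \<noteq> A' h}"
      using exists_closer_neighbor[OF assms(1-7) less.prems] by blast
    show ?thesis
      using walk_snoc[OF less.hyps[OF Q(5,1,3)] Q(2) less.prems Q(4)] .
  qed
qed

theorem mainTheorem4:
  fixes C :: "'a::euclidean_space set"
    and H :: "('a \<times> real) set"
    and x :: 'a
    and \<delta> :: "'a \<Rightarrow> real"
    and A A' :: "'a \<times> real \<Rightarrow> int"
  assumes "C \<noteq> {}" and "closed C" and "convex C"
    and "hyperplane_arrangement H"
    and "convex_distance_function \<delta> x"
    and "A \<in> patterns H" and "region H A \<inter> argmin_on \<delta> C \<noteq> {}"
    and "A' \<in> patterns H" and "region H A' \<inter> C \<noteq> {}"
  shows "\<exists>(k::nat) (S :: nat \<Rightarrow> ('a \<times> real \<Rightarrow> int)).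
           S 1 = A \<and> S (k + 1) = A' \<and>
           (\<forall>i\<in>{1..k+1}. S i \<in> patterns H) \<and>
           (\<forall>i\<in>{1..k}. neighbors H (S i) (S (i + 1))) \<and>
           (\<forall>i\<in>{1..k}. distS \<delta> (region H (S i) \<inter> C) \<le> distS \<delta> (region H (S (i + 1)) \<inter> C)) \<and>
           (\<forall>i\<in>{1..k+1}. region H (S i) \<inter> C \<noteq> {})"
proof -
  have "finite H" using assms(4) unfolding hyperplane_arrangement_def by simp
  obtain y where "y \<in> region H A" "y \<in> argmin_on \<delta> C" using assms(7) by blast
  then have "monotone_walk H C \<delta> A A'"
    using monotone_walk_from_argmin[OF assms(2,3) \<open>finite H\<close> assms(5,6) _ _ assms(8,9)] by blast
  then show ?thesis by (rule monotone_walk_sequence)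
qed

end
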